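(* The sequence $(I_m)_{m\ge0}$ is a Markov chain on $\mathcal R$ with transition matrix $\Pi=(I-D_pK)^{-1}D_{1-p}K$, and it has a unique stationary distribution $\pi$ given by $$\pi=\frac{\mu(I-D_pK)}{1-\bar p}=(1+\lambda)\mu(I-D_pK),$$ where $\lambda=\bar p/(1-\bar p)$. Moreover, the column vector $\mathbf g$ with $g(i)=E_i[G_1]$ satisfies $\mathbf g=(I-D_pK)^{-1}\mathbf p$ and $\pi\cdot\mathbf g=\lambda$.
   Context: Let $\mathcal R=\{1,\dots,N\}$ and let $K$ be a stochastic matrix on $\mathcal R$ whose Markov chain has a unique closed irreducible subset; let $\mu$ (row vector) be its unique stationary distribution. Fix $p:\mathcal R\to(0,1)$, $\mathbf p=(p(1),\dots,p(N))^t$, $I$ the identity, $D_p$ the diagonal matrix with entries $p(i)$, $D_{1-p}=I-D_p$, $\bar p=\mu\cdot\mathbf p$. Under $P_\eta$ (resp. $P_i$ when $\eta=\delta_i$), $(R_j)_{j\ge1}$ is a Markov chain with transition matrix $K$ and $R_1\sim\eta$, and given $(R_j)$ the $\xi(j)$ are independent Bernoulli$(p(R_j))$. Let $S_m=\inf\{k\ge0:\sum_{j=1}^{k+m}(1-\xi(j))=m\}$ (successes before the $m$-th failure), $G_m=S_m-S_{m-1}$, and $I_0=R_1$, $I_m=R_{S_m+m+1}$ for $m\ge1$ (the type of the cookie used right after the $m$-th failure). *)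

theory Defs
  imports "HOL-Analysis.Analysis" "HOL-Probability.Probability"
begin

text \<open>States are the elements of a finite type 'n (playing the role of R = {1..N}).
  Matrices are real^'n^'n, row vectors / column vectors are real^'n.\<close>

definition diag_mat :: "real^'n \<Rightarrow> real^'n^'n" where
  "diag_mat v = (\<chi> i j. if i = j then v $ i else 0)"

definition stochastic_matrix :: "real^'n^'n \<Rightarrow> bool" where
  "stochastic_matrix K \<longleftrightarrow> (\<forall>i j. 0 \<le> K $ i $ j) \<and> (\<forall>i. (\<Sum>j\<in>UNIV. K $ i $ j) = 1)"

definition prob_vector :: "real^'n \<Rightarrow> bool" where
  "prob_vector v \<longleftrightarrow> (\<forall>i. 0 \<le> v $ i) \<and> (\<Sum>i\<in>UNIV. v $ i) = 1"

definition stationary_dist :: "real^'n^'n \<Rightarrow> real^'n \<Rightarrow> bool" where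
  "stationary_dist A v \<longleftrightarrow> prob_vector v \<and> v v* A = v"

definition trans_rel :: "real^'n^'n \<Rightarrow> ('n \<times> 'n) set" where
  "trans_rel K = {(i, j). 0 < K $ i $ j}"

definition closed_set :: "real^'n^'n \<Rightarrow> 'n set \<Rightarrow> bool" where
  "closed_set K C \<longleftrightarrow> (\<forall>i\<in>C. \<forall>j. 0 < K $ i $ j \<longrightarrow> j \<in> C)"

definition irreducible_set :: "real^'n^'n \<Rightarrow> 'n set \<Rightarrow> bool" where
  "irreducible_set K C \<longleftrightarrow> C \<noteq> {} \<and> (\<forall>i\<in>C. \<forall>j\<in>C. (i, j) \<in> (trans_rel K)\<^sup>*)"

definition unique_closed_irreducible :: "real^'n^'n \<Rightarrow> bool" where
  "unique_closed_irreducible K \<longleftrightarrow> (\<exists>!C. closed_set K C \<and> irreducible_set K C)"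

text \<open>The cookie process under P_eta: R j and xi j for j \<ge> 1 (index 0 unused).
  (R_j) is a Markov chain with transition matrix K and R_1 ~ eta; given (R_j), the
  xi j are independent Bernoulli(p(R_j)).  This is expressed through the joint law of
  (R_1,xi_1,...,R_n,xi_n) for every n.\<close>
definition cookie_process ::
  "'w measure \<Rightarrow> (nat \<Rightarrow> 'w \<Rightarrow> 'n) \<Rightarrow> (nat \<Rightarrow> 'w \<Rightarrow> bool) \<Rightarrow> real^'n^'n \<Rightarrow> real^'n \<Rightarrow> real^'n \<Rightarrow> bool"
  where
  "cookie_process M R \<xi> K p \<eta> \<longleftrightarrow>
     prob_space M \<and>
     (\<forall>j. R j \<in> measurable M (count_space UNIV)) \<and>
     (\<forall>j. \<xi> j \<in> measurable M (count_space UNIV)) \<and>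
     (\<forall>n\<ge>1. \<forall>(r :: nat \<Rightarrow> 'n) (x :: nat \<Rightarrow> bool).
        measure M {\<omega>\<in>space M. \<forall>j\<in>{1..n}. R j \<omega> = r j \<and> \<xi> j \<omega> = x j}
        = \<eta> $ r 1 * (\<Prod>j\<in>{1..<n}. K $ r j $ r (Suc j))
            * (\<Prod>j\<in>{1..n}. if x j then p $ r j else 1 - p $ r j))"

text \<open>S_m = number of successes before the m-th failure (LEAST; a.s. well defined).\<close>
definition S_succ :: "(nat \<Rightarrow> 'w \<Rightarrow> bool) \<Rightarrow> nat \<Rightarrow> 'w \<Rightarrow> nat" where
  "S_succ \<xi> m \<omega> = (LEAST k. card {j\<in>{1..k+m}. \<not> \<xi> j \<omega>} = m)"

definition G_succ :: "(nat \<Rightarrow> 'w \<Rightarrow> bool) \<Rightarrow> nat \<Rightarrow> 'w \<Rightarrow> nat" where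
  "G_succ \<xi> m \<omega> = S_succ \<xi> m \<omega> - S_succ \<xi> (m - 1) \<omega>"

text \<open>I_0 = R_1, I_m = R_(S_m+m+1): type of the cookie used right after the m-th failure.\<close>
definition I_type :: "(nat \<Rightarrow> 'w \<Rightarrow> 'n) \<Rightarrow> (nat \<Rightarrow> 'w \<Rightarrow> bool) \<Rightarrow> nat \<Rightarrow> 'w \<Rightarrow> 'n" where
  "I_type R \<xi> m \<omega> = (if m = 0 then R 1 \<omega> else R (S_succ \<xi> m \<omega> + m + 1) \<omega>)"

end

theory Submission
  imports Defs
begin

text \<open>Between two failures the types evolve under the sub-stochastic kernel D_p K, whose rows
  have mass at most max p < 1, so the Green matrix (I - D_p K)^-1 = sum_n (D_p K)^n exists. Summing
  over the number of successes before the next failure shows that the type after the next failure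
  is drawn from the row of Pi = (I - D_p K)^-1 D_(1-p) K indexed by the current type. Only the lower
  bound P(I_0 = i_0, ..., I_m = i_m) >= eta(i_0) Pi(i_0, i_1) ... Pi(i_(m-1), i_m) is derived, from
  the disjoint events "the m-th failure happens at time n"; as the right-hand sides sum to 1 over
  all type sequences, equality follows without showing separately that failures occur almost
  surely.

  Pi has unit row sums and mu (I - D_p K) is Pi-invariant. If nu is Pi-invariant, then
  nu (I - D_p K)^-1 is K-invariant, hence a multiple of mu: with a unique closed irreducible class,
  K-harmonic vectors are constant by the maximum principle. Finally P(G_1 > t) is the probability
  that the first t + 1 draws succeed, and these probabilities sum to eta (I - D_p K)^-1 p.\<close>

section \<open>Matrices and the maximum principle\<close>

lemma diag_mat_mult_nth: "(diag_mat v ** M) $ i $ j = v $ i * M $ i $ j"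
  by (simp add: diag_mat_def matrix_matrix_mult_def if_distrib[of "\<lambda>x. x * _"] cong: if_cong)

lemma vector_matrix_mult_nth: "(x v* M) $ j = (\<Sum>i\<in>UNIV. x $ i * M $ i $ j)"
  by (simp add: vector_matrix_mult_def mult.commute)

lemma matrix_vector_mult_nth: "(M *v x) $ i = (\<Sum>j\<in>UNIV. M $ i $ j * x $ j)"
  by (simp add: matrix_vector_mult_def)

lemma diag_mat_one_minus_mult: "diag_mat (1 - p) ** K = K - diag_mat p ** K"
  by (simp add: vec_eq_iff diag_mat_mult_nth algebra_simps)

lemma axis_vector_matrix_mult: "(axis a 1 v* M) $ j = M $ a $ j"
  by (simp add: vector_matrix_mult_nth axis_def if_distrib[of "\<lambda>x. x * _"] cong: if_cong)

lemma inner_axis_vector_matrix_mult: "(axis i 1 v* A) \<bullet> v = (A *v v) $ i"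
  by (simp add: inner_vec_def axis_vector_matrix_mult matrix_vector_mult_nth)

lemma matrix_inv_inverse:
  fixes A :: "real^'n^'n"
  assumes "invertible A"
  shows "A ** matrix_inv A = mat 1" "matrix_inv A ** A = mat 1"
proof -
  have "\<exists>A'. A ** A' = mat 1 \<and> A' ** A = mat 1" using assms by (simp add: invertible_def)
  then have "A ** matrix_inv A = mat 1 \<and> matrix_inv A ** A = mat 1"
    unfolding matrix_inv_def by (rule someI_ex)
  then show "A ** matrix_inv A = mat 1" "matrix_inv A ** A = mat 1" by auto
qed

lemma obtain_argmax:
  fixes f :: "'n::finite \<Rightarrow> real"
  obtains i0 where "\<And>i. f i \<le> f i0"
  using Max_ge[of "range f"] Max_in[of "range f"] by fastforce

lemma summable_contraction_recursion:
  fixes s t :: "nat \<Rightarrow> real"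
  assumes q: "0 \<le> q" "q < 1" and s_nonneg: "\<And>n. 0 \<le> s n" and t_nonneg: "\<And>n. 0 \<le> t n"
    and t_summable: "summable t" and s_step: "\<And>n. s (Suc n) \<le> q * s n + t n"
  shows "summable s"
proof (rule bounded_imp_summable)
  have "(1 - q) * (\<Sum>n<Suc N. s n) \<le> s 0 + suminf t" for N
  proof -
    have "(\<Sum>n<Suc N. s n) \<le> s 0 + (\<Sum>n<N. q * s n + t n)"
      unfolding sum.lessThan_Suc_shift by (intro add_left_mono sum_mono s_step)
    also have "\<dots> = s 0 + q * (\<Sum>n<N. s n) + (\<Sum>n<N. t n)"
      by (simp add: sum.distrib sum_distrib_left)
    also have "\<dots> \<le> s 0 + q * (\<Sum>n<Suc N. s n) + suminf t"
      using q s_nonneg t_nonneg sum_le_suminf[OF t_summable, of "{..<N}"]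
      by (intro add_mono add_left_mono mult_left_mono) auto
    finally show ?thesis by (simp add: algebra_simps)
  qed
  then show "(\<Sum>k\<le>n. s k) \<le> (s 0 + suminf t) / (1 - q)" for n
    using q by (simp add: lessThan_Suc_atMost field_simps)
qed (rule s_nonneg)

lemma invertible_mat_1_minus_diag_mat_mult:
  fixes K :: "real^'n^'n" and p :: "real^'n"
  assumes K: "stochastic_matrix K" and p: "\<And>i. 0 \<le> p $ i \<and> p $ i < 1"
  shows "invertible (mat 1 - diag_mat p ** K)"
proof -
  have "x = 0" if h: "(mat 1 - diag_mat p ** K) *v x = 0" for x :: "real^'n"
  proof -
    have x_eq: "x $ i = p $ i * (\<Sum>j\<in>UNIV. K $ i $ j * x $ j)" for i
    proof -
      have "x $ i - (\<Sum>j\<in>UNIV. p $ i * K $ i $ j * x $ j) = 0"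
        using arg_cong[OF h, of "\<lambda>v. v $ i"]
        by (simp add: matrix_vector_mult_diff_rdistrib matrix_vector_mult_nth diag_mat_mult_nth)
      then show ?thesis by (simp add: sum_distrib_left mult.assoc)
    qed
    obtain i0 where i0: "\<And>i. \<bar>x $ i\<bar> \<le> \<bar>x $ i0\<bar>"
      using obtain_argmax[of "\<lambda>i. \<bar>x $ i\<bar>"] by blast
    have "\<bar>\<Sum>j\<in>UNIV. K $ i0 $ j * x $ j\<bar> \<le> (\<Sum>j\<in>UNIV. \<bar>K $ i0 $ j * x $ j\<bar>)"
      by (rule sum_abs)
    also have "\<dots> \<le> (\<Sum>j\<in>UNIV. K $ i0 $ j * \<bar>x $ i0\<bar>)"
      using K i0 unfolding stochastic_matrix_def
      by (intro sum_mono) (simp add: abs_mult mult_left_mono)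
    also have "\<dots> = \<bar>x $ i0\<bar>"
      using K unfolding stochastic_matrix_def by (simp add: sum_distrib_right[symmetric])
    finally have mean_le: "\<bar>\<Sum>j\<in>UNIV. K $ i0 $ j * x $ j\<bar> \<le> \<bar>x $ i0\<bar>" .
    have "\<bar>x $ i0\<bar> = p $ i0 * \<bar>\<Sum>j\<in>UNIV. K $ i0 $ j * x $ j\<bar>"
      using x_eq[of i0] p[of i0] by (simp add: abs_mult)
    also have "\<dots> \<le> p $ i0 * \<bar>x $ i0\<bar>"
      using mean_le p[of i0] by (simp add: mult_left_mono)
    finally have "(1 - p $ i0) * \<bar>x $ i0\<bar> \<le> 0" by (simp add: algebra_simps)
    then have "\<bar>x $ i0\<bar> = 0"
      using p[of i0] by (simp add: mult_le_0_iff)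
    then show "x = 0"
      using i0 by (metis abs_le_zero_iff vec_eq_iff zero_index)
  qed
  then show ?thesis
    using matrix_left_invertible_ker invertible_left_inverse by blast
qed

lemma closed_set_argmax:
  fixes K :: "real^'n^'n" and x :: "real^'n"
  assumes K: "stochastic_matrix K" and harmonic: "K *v x = x"
  shows "closed_set K {i. \<forall>j. x $ j \<le> x $ i}"
  unfolding closed_set_def
proof (intro ballI allI impI)
  fix i l assume i: "i \<in> {i. \<forall>j. x $ j \<le> x $ i}" and Kil: "0 < K $ i $ l"
  have "(\<Sum>j\<in>UNIV. K $ i $ j * (x $ i - x $ j))
      = x $ i * (\<Sum>j\<in>UNIV. K $ i $ j) - (\<Sum>j\<in>UNIV. K $ i $ j * x $ j)"
    by (simp add: algebra_simps sum_subtractf sum_distrib_left)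
  also have "\<dots> = 0"
    using K arg_cong[OF harmonic, of "\<lambda>v. v $ i"]
    unfolding stochastic_matrix_def by (simp add: matrix_vector_mult_nth)
  finally have "(\<Sum>j\<in>UNIV. K $ i $ j * (x $ i - x $ j)) = 0" .
  moreover have "\<forall>j\<in>UNIV. 0 \<le> K $ i $ j * (x $ i - x $ j)"
    using i K unfolding stochastic_matrix_def by auto
  ultimately have "K $ i $ l * (x $ i - x $ l) = 0"
    using sum_nonneg_eq_0_iff[of UNIV "\<lambda>j. K $ i $ j * (x $ i - x $ j)"] by simp
  then show "l \<in> {i. \<forall>j. x $ j \<le> x $ i}" using i Kil by simp
qed

text \<open>A nonempty closed set of minimal cardinality is irreducible: the states reachable from any of
  its points form a closed subset.\<close>

lemma closed_set_contains_irreducible: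
  fixes K :: "real^'n^'n"
  assumes "closed_set K S" "S \<noteq> {}"
  obtains C where "C \<subseteq> S" "closed_set K C" "irreducible_set K C"
proof -
  define P where "P C \<longleftrightarrow> C \<subseteq> S \<and> C \<noteq> {} \<and> closed_set K C" for C
  define C where "C = arg_min card P"
  have PC: "P C" and minC: "\<And>C'. P C' \<Longrightarrow> card C \<le> card C'"
    using arg_min_nat_lemma[of P S card] assms unfolding C_def P_def by auto
  have reach: "C = {j. (c, j) \<in> (trans_rel K)\<^sup>*}" if c: "c \<in> C" for c
  proof -
    define Rc where "Rc = {j. (c, j) \<in> (trans_rel K)\<^sup>*}"
    have sub: "Rc \<subseteq> C"
    proof
      fix j assume "j \<in> Rc"
      then have "(c, j) \<in> (trans_rel K)\<^sup>*" by (simp add: Rc_def)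
      then show "j \<in> C"
        by induction (use c PC in \<open>auto simp: P_def closed_set_def trans_rel_def\<close>)
    qed
    have "P Rc"
      using sub PC unfolding P_def closed_set_def Rc_def trans_rel_def
      by (auto intro: rtrancl_into_rtrancl)
    then have "Rc = C" using sub minC by (intro card_seteq) auto
    then show ?thesis by (simp add: Rc_def)
  qed
  have "irreducible_set K C"
    unfolding irreducible_set_def using PC reach unfolding P_def by blast
  then show ?thesis using PC that unfolding P_def by blast
qed

lemma harmonic_vector_constant:
  fixes K :: "real^'n^'n" and x :: "real^'n"
  assumes K: "stochastic_matrix K" and U: "unique_closed_irreducible K" and harmonic: "K *v x = x"
  obtains c where "\<And>i. x $ i = c"
proof -
  obtain C0 where C0: "irreducible_set K C0"
    and unique: "\<And>C. closed_set K C \<Longrightarrow> irreducible_set K C \<Longrightarrow> C = C0"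
    using U unfolding unique_closed_irreducible_def by blast
  have argmax_in_C0: "C0 \<subseteq> {i. \<forall>j. y $ j \<le> y $ i}" if y_harmonic: "K *v y = y" for y
  proof -
    obtain i1 where "\<And>i. y $ i \<le> y $ i1" using obtain_argmax[of "\<lambda>i. y $ i"] by blast
    then obtain D where "D \<subseteq> {i. \<forall>j. y $ j \<le> y $ i}" "closed_set K D" "irreducible_set K D"
      using closed_set_contains_irreducible[OF closed_set_argmax[OF K y_harmonic]] by blast
    then show ?thesis using unique by blast
  qed
  obtain c where "c \<in> C0" using C0 unfolding irreducible_set_def by auto
  moreover have "K *v (- x) = - x"
    using harmonic by (simp add: matrix_vector_mult_diff_distrib[of K 0 x, simplified])
  ultimately have "x $ j \<le> x $ c" "- x $ j \<le> - x $ c" for j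
    using argmax_in_C0[OF harmonic] argmax_in_C0[of "- x"] by auto
  then have "x $ j = x $ c" for j by (simp add: antisym)
  then show ?thesis using that by blast
qed

lemma left_invariant_multiple_of_stationary:
  fixes K :: "real^'n^'n" and \<mu> w :: "real^'n"
  assumes K: "stochastic_matrix K" and U: "unique_closed_irreducible K"
    and \<mu>: "stationary_dist K \<mu>" and w: "w v* K = w"
  shows "w = (\<Sum>i\<in>UNIV. w $ i) *s \<mu>"
proof -
  have \<mu>K: "\<mu> v* K = \<mu>" and \<mu>_sum: "(\<Sum>i\<in>UNIV. \<mu> $ i) = 1"
    using \<mu> unfolding stationary_dist_def prob_vector_def by auto
  define E :: "real^'n^'n" where "E = (\<chi> i j. \<mu> $ j)"
  define Z where "Z = mat 1 - K + E"
  have vE: "v v* E = (\<Sum>i\<in>UNIV. v $ i) *s \<mu>" for v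
    by (simp add: E_def vec_eq_iff vector_matrix_mult_nth sum_distrib_right)
  have \<mu>Z: "\<mu> v* Z = \<mu>"
    unfolding Z_def
    by (simp add: vector_matrix_mult_add_rdistrib vector_matrix_mult_diff_rdistrib \<mu>K vE \<mu>_sum)
  txt \<open>Z is injective: a kernel vector x has \<mu>\<bullet>x = \<mu>\<bullet>(Z x) = 0, hence is K-harmonic,
    hence constant, and the constant is \<mu>\<bullet>x = 0.\<close>
  have "x = 0" if Zx: "Z *v x = 0" for x
  proof -
    have \<mu>x: "\<mu> \<bullet> x = 0" using dot_lmul_matrix[of \<mu> Z x] \<mu>Z Zx by simp
    then have "E *v x = 0"
      by (simp add: E_def vec_eq_iff matrix_vector_mult_nth inner_vec_def)
    then have "K *v x = x" using Zx unfolding Z_def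
      by (simp add: matrix_vector_mult_add_rdistrib matrix_vector_mult_diff_rdistrib)
    then obtain c where c: "\<And>i. x $ i = c" using harmonic_vector_constant[OF K U] by blast
    then have "\<mu> \<bullet> x = c" using \<mu>_sum by (simp add: inner_vec_def sum_distrib_right[symmetric])
    then show "x = 0" using \<mu>x c by (simp add: vec_eq_iff)
  qed
  then obtain Z' where ZZ': "Z ** Z' = mat 1"
    using matrix_left_invertible_ker invertible_left_inverse invertible_def by metis
  have "w = (w v* Z) v* Z'" by (simp add: ZZ' vector_matrix_mul_assoc)
  also have "w v* Z = (\<Sum>i\<in>UNIV. w $ i) *s \<mu>"
    unfolding Z_def
    by (simp add: vector_matrix_mult_add_rdistrib vector_matrix_mult_diff_rdistrib w vE)
  also have "\<mu> v* Z' = \<mu>"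
    by (metis \<mu>Z ZZ' vector_matrix_mul_assoc vector_matrix_mul_rid)
  then have "((\<Sum>i\<in>UNIV. w $ i) *s \<mu>) v* Z' = (\<Sum>i\<in>UNIV. w $ i) *s \<mu>"
    by (simp add: scalar_vector_matrix_assoc)
  finally show ?thesis .
qed

section \<open>The Green matrix and the failure chain\<close>

definition green_mat :: "real^'n^'n \<Rightarrow> real^'n \<Rightarrow> real^'n^'n" where
  "green_mat K p = matrix_inv (mat 1 - diag_mat p ** K)"

definition Pi_mat :: "real^'n^'n \<Rightarrow> real^'n \<Rightarrow> real^'n^'n" where
  "Pi_mat K p = green_mat K p ** (diag_mat (1 - p) ** K)"

locale cookie_kernel =
  fixes K :: "real^'n^'n" and p :: "real^'n"
  assumes stochastic: "stochastic_matrix K" and p_bounds: "\<And>i. 0 < p $ i \<and> p $ i < 1"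
begin

lemma K_nonneg: "0 \<le> K $ i $ j" and K_row_sum: "(\<Sum>j\<in>UNIV. K $ i $ j) = 1"
  using stochastic unfolding stochastic_matrix_def by auto

lemma invertible_success: "invertible (mat 1 - diag_mat p ** K)"
  using p_bounds by (intro invertible_mat_1_minus_diag_mat_mult[OF stochastic]) (simp add: less_imp_le)

lemmas green_mat_inverse = matrix_inv_inverse[OF invertible_success, folded green_mat_def]

lemma Pi_mat_row_sum: "(\<Sum>j\<in>UNIV. Pi_mat K p $ i $ j) = 1"
proof -
  define one :: "real^'n" where "one = (\<chi> i. 1)"
  have "(diag_mat (1 - p) ** K) *v one = (mat 1 - diag_mat p ** K) *v one"
    by (simp add: one_def vec_eq_iff matrix_vector_mult_nth diag_mat_mult_nth
        matrix_vector_mult_diff_rdistrib sum_distrib_left[symmetric] K_row_sum mult.assoc[symmetric])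
  then have "Pi_mat K p *v one = one"
    by (metis Pi_mat_def green_mat_inverse(2) matrix_vector_mul_assoc matrix_vector_mul_lid)
  then have "(Pi_mat K p *v one) $ i = 1" by (simp add: one_def)
  then show ?thesis by (simp add: matrix_vector_mult_nth one_def)
qed

lemma sum_vector_diag_mat_mult:
  "(\<Sum>r\<in>UNIV. (v v* (diag_mat q ** K)) $ r) = (\<Sum>i\<in>UNIV. v $ i * q $ i)"
proof -
  have "(\<Sum>r\<in>UNIV. (v v* (diag_mat q ** K)) $ r) = (\<Sum>r\<in>UNIV. \<Sum>i\<in>UNIV. v $ i * q $ i * K $ i $ r)"
    by (simp add: vector_matrix_mult_nth diag_mat_mult_nth mult.assoc)
  also have "\<dots> = (\<Sum>i\<in>UNIV. \<Sum>r\<in>UNIV. v $ i * q $ i * K $ i $ r)"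
    by (rule sum.swap)
  also have "\<dots> = (\<Sum>i\<in>UNIV. v $ i * q $ i)"
    by (simp add: sum_distrib_left[symmetric] K_row_sum)
  finally show ?thesis .
qed

text \<open>Each step of the recursion keeps at most the fraction max p of the total mass.\<close>

lemma summable_success_recursion:
  fixes x u :: "nat \<Rightarrow> real^'n"
  assumes rec: "\<And>n. x (Suc n) = x n v* (diag_mat p ** K) + u n"
    and x_nonneg: "\<And>n r. 0 \<le> x n $ r" and u_nonneg: "\<And>n r. 0 \<le> u n $ r"
    and u_summable: "\<And>r. summable (\<lambda>n. u n $ r)"
  shows "summable (\<lambda>n. x n $ r)"
proof -
  obtain i0 where i0: "\<And>i. p $ i \<le> p $ i0" using obtain_argmax[of "\<lambda>i. p $ i"] by blast
  define s where "s n = (\<Sum>r\<in>UNIV. x n $ r)" for n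
  define t where "t n = (\<Sum>r\<in>UNIV. u n $ r)" for n
  have s_step: "s (Suc n) \<le> p $ i0 * s n + t n" for n
  proof -
    have "s (Suc n) = (\<Sum>i\<in>UNIV. x n $ i * p $ i) + t n"
      by (simp add: s_def t_def rec sum.distrib sum_vector_diag_mat_mult)
    also have "(\<Sum>i\<in>UNIV. x n $ i * p $ i) \<le> (\<Sum>i\<in>UNIV. x n $ i * p $ i0)"
      using x_nonneg i0 by (intro sum_mono mult_left_mono) auto
    finally show ?thesis by (simp add: s_def sum_distrib_left mult.commute)
  qed
  have "0 \<le> s n" "0 \<le> t n" for n
    unfolding s_def t_def using x_nonneg u_nonneg by (auto intro: sum_nonneg)
  moreover have "summable t" unfolding t_def by (intro summable_sum u_summable)
  ultimately have "summable s"
    using summable_contraction_recursion[where q = "p $ i0" and s = s and t = t, OF _ _ _ _ _ s_step] p_bounds[of i0] by (simp add: less_imp_le)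
  moreover have "norm (x n $ r) \<le> s n" for n
    unfolding s_def using x_nonneg by (simp add: member_le_sum)
  ultimately show ?thesis
    by (rule summable_comparison_test')
qed

lemma success_recursion_sums:
  fixes x u :: "nat \<Rightarrow> real^'n"
  assumes rec: "\<And>n. x (Suc n) = x n v* (diag_mat p ** K) + u n"
    and x_nonneg: "\<And>n r. 0 \<le> x n $ r" and u_nonneg: "\<And>n r. 0 \<le> u n $ r"
    and u_sums: "\<And>r. (\<lambda>n. u n $ r) sums U $ r"
  shows "(\<lambda>n. x n $ r) sums ((x 0 + U) v* green_mat K p) $ r"
proof -
  have u_summable: "summable (\<lambda>n. u n $ r)" for r using u_sums by (rule sums_summable)
  note x_summable = summable_success_recursion[OF rec x_nonneg u_nonneg u_summable]
  define X where "X = (\<chi> r. \<Sum>n. x n $ r)"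
  have "(X - x 0) $ r = (X v* (diag_mat p ** K) + U) $ r" for r
  proof -
    have "(X - x 0) $ r = (\<Sum>n. x (Suc n) $ r)"
      using suminf_split_head[OF x_summable] by (simp add: X_def)
    also have "\<dots> = (\<Sum>n. (\<Sum>i\<in>UNIV. x n $ i * (diag_mat p ** K) $ i $ r) + u n $ r)"
      by (simp add: rec vector_matrix_mult_nth)
    also have "\<dots> = (\<Sum>n. \<Sum>i\<in>UNIV. x n $ i * (diag_mat p ** K) $ i $ r) + U $ r"
      using x_summable u_sums
      by (subst suminf_add[symmetric]) (auto intro!: summable_sum summable_mult2 simp: sums_iff)
    also have "\<dots> = (\<Sum>i\<in>UNIV. \<Sum>n. x n $ i * (diag_mat p ** K) $ i $ r) + U $ r"
      using x_summable by (subst suminf_sum) (auto intro: summable_mult2)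
    also have "\<dots> = (X v* (diag_mat p ** K) + U) $ r"
      using x_summable by (simp add: X_def vector_matrix_mult_nth suminf_mult2)
    finally show ?thesis .
  qed
  then have "X - x 0 = X v* (diag_mat p ** K) + U" by (simp add: vec_eq_iff)
  then have "X v* (mat 1 - diag_mat p ** K) = x 0 + U"
    by (simp add: vector_matrix_mult_diff_rdistrib algebra_simps)
  then have X_eq: "X = (x 0 + U) v* green_mat K p"
    by (metis green_mat_inverse(1) vector_matrix_mul_assoc vector_matrix_mul_rid)
  have "(\<lambda>n. x n $ r) sums X $ r" using x_summable by (simp add: X_def summable_sums)
  then show ?thesis by (simp add: X_eq)
qed

end

locale stationary_cookie_kernel = cookie_kernel +
  fixes \<mu> :: "real^'n"
  assumes unique_class: "unique_closed_irreducible K" and stationary: "stationary_dist K \<mu>"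
begin

lemma \<mu>_nonneg: "0 \<le> \<mu> $ i" and \<mu>_sum: "(\<Sum>i\<in>UNIV. \<mu> $ i) = 1" and \<mu>K: "\<mu> v* K = \<mu>"
  using stationary unfolding stationary_dist_def prob_vector_def by auto

lemma mean_success_lt_1: "\<mu> \<bullet> p < 1"
proof -
  obtain i0 where i0: "0 < \<mu> $ i0"
    using \<mu>_sum \<mu>_nonneg by (metis less_eq_real_def sum.neutral zero_neq_one)
  have "0 < (\<Sum>i\<in>UNIV. \<mu> $ i * (1 - p $ i))"
    using i0 p_bounds \<mu>_nonneg
    by (intro sum_pos2[of UNIV i0]) (auto intro!: mult_nonneg_nonneg simp: less_imp_le)
  also have "\<dots> = 1 - \<mu> \<bullet> p"
    by (simp add: inner_vec_def algebra_simps sum_subtractf \<mu>_sum)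
  finally show ?thesis by simp
qed

text \<open>failure_flow $ j is the stationary frequency of a failure followed by a draw of type j.\<close>

definition failure_flow :: "real^'n" where
  "failure_flow = \<mu> v* (mat 1 - diag_mat p ** K)"

lemma failure_flow_eq: "failure_flow = \<mu> v* (diag_mat (1 - p) ** K)"
  by (simp add: failure_flow_def diag_mat_one_minus_mult vector_matrix_mult_diff_rdistrib \<mu>K)

lemma failure_flow_nonneg: "0 \<le> failure_flow $ j"
  using \<mu>_nonneg K_nonneg p_bounds
  by (auto simp: failure_flow_eq vector_matrix_mult_nth diag_mat_mult_nth less_imp_le
      intro!: sum_nonneg mult_nonneg_nonneg)

lemma failure_flow_sum: "(\<Sum>j\<in>UNIV. failure_flow $ j) = 1 - \<mu> \<bullet> p"
  by (simp add: failure_flow_eq sum_vector_diag_mat_mult inner_vec_def algebra_simps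
      sum_subtractf \<mu>_sum)

lemma failure_flow_Pi_mat: "failure_flow v* Pi_mat K p = failure_flow"
proof -
  have "failure_flow v* Pi_mat K p = (failure_flow v* green_mat K p) v* (diag_mat (1 - p) ** K)"
    by (simp add: Pi_mat_def vector_matrix_mul_assoc)
  also have "failure_flow v* green_mat K p = \<mu>"
    by (simp add: failure_flow_def vector_matrix_mul_assoc green_mat_inverse)
  finally show ?thesis by (simp add: failure_flow_eq)
qed

lemma stationary_Pi_mat: "stationary_dist (Pi_mat K p) ((1 / (1 - \<mu> \<bullet> p)) *s failure_flow)"
  unfolding stationary_dist_def prob_vector_def
  using mean_success_lt_1 failure_flow_nonneg
  by (simp add: sum_divide_distrib[symmetric] failure_flow_sum scalar_vector_matrix_assoc
      failure_flow_Pi_mat)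

lemma stationary_Pi_mat_unique:
  assumes "stationary_dist (Pi_mat K p) \<nu>"
  shows "\<nu> = (1 / (1 - \<mu> \<bullet> p)) *s failure_flow"
proof -
  have \<nu>_Pi: "\<nu> v* Pi_mat K p = \<nu>" and \<nu>_sum: "(\<Sum>i\<in>UNIV. \<nu> $ i) = 1"
    using assms unfolding stationary_dist_def prob_vector_def by auto
  define w where "w = \<nu> v* green_mat K p"
  have "w v* (diag_mat (1 - p) ** K) = \<nu>"
    using \<nu>_Pi by (simp add: w_def Pi_mat_def vector_matrix_mul_assoc)
  moreover have w_gap: "w v* (mat 1 - diag_mat p ** K) = \<nu>"
    by (simp add: w_def vector_matrix_mul_assoc green_mat_inverse)
  ultimately have "w v* K - w v* (diag_mat p ** K) = w - w v* (diag_mat p ** K)"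
    by (simp add: diag_mat_one_minus_mult vector_matrix_mult_diff_rdistrib)
  then have "w v* K = w" by simp
  then have "w = (\<Sum>i\<in>UNIV. w $ i) *s \<mu>"
    by (rule left_invariant_multiple_of_stationary[OF stochastic unique_class stationary])
  then have \<nu>_eq: "\<nu> = (\<Sum>i\<in>UNIV. w $ i) *s failure_flow"
    using w_gap by (metis failure_flow_def scalar_vector_matrix_assoc)
  then have "(\<Sum>i\<in>UNIV. w $ i) * (1 - \<mu> \<bullet> p) = 1"
    using \<nu>_sum by (simp add: sum_distrib_left[symmetric] failure_flow_sum)
  then show ?thesis
    using \<nu>_eq mean_success_lt_1 by (simp add: field_simps)
qed

lemma stationary_Pi_mat_inner_green:
  "((1 / (1 - \<mu> \<bullet> p)) *s failure_flow) \<bullet> (green_mat K p *v p) = (\<mu> \<bullet> p) / (1 - \<mu> \<bullet> p)"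
proof -
  have "failure_flow v* green_mat K p = \<mu>"
    by (simp add: failure_flow_def vector_matrix_mul_assoc green_mat_inverse)
  moreover have "(c *s \<mu>) \<bullet> p = c * (\<mu> \<bullet> p)" for c
    by (simp add: inner_vec_def sum_distrib_left mult.assoc)
  ultimately show ?thesis
    by (simp add: dot_lmul_matrix[symmetric] scalar_vector_matrix_assoc)
qed

end

section \<open>Histories and failure times\<close>

lemma finite_lists_length: "finite {l :: 'a::finite list. length l = n}"
  using finite_lists_length_eq[of "UNIV :: 'a set" n] by simp

lemma sum_lists_length_Suc:
  fixes f :: "'a::finite list \<Rightarrow> 'b::comm_monoid_add"
  shows "(\<Sum>l | length l = Suc n. f l) = (\<Sum>a\<in>UNIV. \<Sum>l | length l = n. f (a # l))"
proof -
  have image: "{l. length l = Suc n} = (\<lambda>(a, l). a # l) ` (UNIV \<times> {l. length l = n})"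
    by (auto simp: image_iff length_Suc_conv)
  have inj: "inj_on (\<lambda>(a, l). a # l) (UNIV \<times> {l :: 'a list. length l = n})"
    by (auto simp: inj_on_def)
  have "(\<Sum>l | length l = Suc n. f l) = (\<Sum>(a, l)\<in>UNIV \<times> {l. length l = n}. f (a # l))"
    unfolding image by (subst sum.reindex[OF inj]) (simp add: case_prod_beta comp_def)
  also have "\<dots> = (\<Sum>a\<in>UNIV. \<Sum>l | length l = n. f (a # l))"
    by (rule sum.cartesian_product[symmetric])
  finally show ?thesis .
qed

lemma sum_lists_length_Suc_bool:
  fixes f :: "('a::finite \<times> bool) list \<Rightarrow> 'b::comm_monoid_add"
  shows "(\<Sum>w | length w = Suc n. f w)
    = (\<Sum>r\<in>UNIV. (\<Sum>w | length w = n. f ((r, True) # w)) + (\<Sum>w | length w = n. f ((r, False) # w)))"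
proof -
  have "(\<Sum>w | length w = Suc n. f w) = (\<Sum>(r, b)\<in>UNIV \<times> UNIV. \<Sum>w | length w = n. f ((r, b) # w))"
    by (simp add: sum_lists_length_Suc UNIV_Times_UNIV case_prod_beta')
  also have "\<dots> = (\<Sum>r\<in>UNIV. \<Sum>b\<in>UNIV. \<Sum>w | length w = n. f ((r, b) # w))"
    by (rule sum.cartesian_product[symmetric])
  finally show ?thesis by (simp add: UNIV_bool add.commute)
qed

text \<open>Histories are stored newest first: hist r x n = [(r n, x n), ..., (r 1, x 1)].\<close>

fun hist :: "(nat \<Rightarrow> 'n) \<Rightarrow> (nat \<Rightarrow> bool) \<Rightarrow> nat \<Rightarrow> ('n \<times> bool) list" where
  "hist r x 0 = []"
| "hist r x (Suc n) = (r (Suc n), x (Suc n)) # hist r x n"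

lemma length_hist [simp]: "length (hist r x n) = n"
  by (induction n) auto

lemma hist_eq_iff: "hist r x n = hist r' x' n \<longleftrightarrow> (\<forall>j\<in>{1..n}. r j = r' j \<and> x j = x' j)"
proof (induction n)
  case (Suc n)
  have "{1..Suc n} = insert (Suc n) {1..n}" by auto
  then show ?case using Suc by auto
qed simp

lemma hist_surj: "\<exists>r x. w = hist r x (length w)"
proof (induction w)
  case (Cons y w)
  then obtain r x where w: "w = hist r x (length w)" by blast
  define n where "n = length w"
  have "hist (r(Suc n := fst y)) (x(Suc n := snd y)) n = hist r x n"
    by (subst hist_eq_iff) auto
  then have "y # w = hist (r(Suc n := fst y)) (x(Suc n := snd y)) (length (y # w))"
    using w by (simp add: n_def[symmetric])
  then show ?case by blast
qed simp

definition failures :: "(nat \<Rightarrow> bool) \<Rightarrow> nat \<Rightarrow> nat" where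
  "failures x t = card {l\<in>{1..t}. \<not> x l}"

lemma failures_0 [simp]: "failures x 0 = 0"
  by (simp add: failures_def)

lemma failures_Suc: "failures x (Suc t) = failures x t + (if x (Suc t) then 0 else 1)"
proof -
  have "{l\<in>{1..Suc t}. \<not> x l}
      = (if x (Suc t) then {l\<in>{1..t}. \<not> x l} else insert (Suc t) {l\<in>{1..t}. \<not> x l})"
    by (auto simp: le_Suc_eq)
  then show ?thesis by (simp add: failures_def)
qed

lemma failures_le: "failures x t \<le> t"
proof -
  have "failures x t \<le> card {1..t}" unfolding failures_def by (rule card_mono) auto
  then show ?thesis by simp
qed

lemma failures_mono: "a \<le> b \<Longrightarrow> failures x a \<le> failures x b"
  unfolding failures_def by (rule card_mono) auto

lemma failures_pos: "1 \<le> j \<Longrightarrow> \<not> x j \<Longrightarrow> 1 \<le> failures x j"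
  using card_mono[of "{l\<in>{1..j}. \<not> x l}" "{j}"] unfolding failures_def by auto

text \<open>A failure strictly increases the failure count, so two different times cannot both carry
  the m-th failure.\<close>

lemma failure_time_unique:
  assumes "a < b" "failures x a = m" "failures x b = m" "\<not> x b"
  shows False
proof -
  obtain b' where b: "b = Suc b'" using assms(1) by (cases b) auto
  have "failures x a \<le> failures x b'" using assms(1) b by (intro failures_mono) simp
  then show False using assms(2-4) by (simp add: b failures_Suc)
qed

lemma S_succ_eq_failure_time:
  assumes "1 \<le> k" "k \<le> failures (\<lambda>j. \<xi> j \<omega>) n"
  defines "t \<equiv> LEAST t. k \<le> failures (\<lambda>j. \<xi> j \<omega>) t"
  shows "S_succ \<xi> k \<omega> = t - k" "failures (\<lambda>j. \<xi> j \<omega>) t = k" "\<not> \<xi> t \<omega>" "1 \<le> t" "t \<le> n"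
proof -
  let ?F = "failures (\<lambda>j. \<xi> j \<omega>)"
  have kt: "k \<le> ?F t" unfolding t_def by (rule LeastI[of _ n]) (rule assms(2))
  show "t \<le> n" unfolding t_def by (rule Least_le) (rule assms(2))
  obtain t' where t': "t = Suc t'" using kt assms(1) by (cases t) auto
  have "\<not> k \<le> ?F t'" unfolding t_def by (rule not_less_Least) (simp add: t'[unfolded t_def])
  then have "?F t = k" "\<not> \<xi> t \<omega>" using kt by (auto simp: t' failures_Suc split: if_splits)
  then show Ft: "?F t = k" and "\<not> \<xi> t \<omega>" "1 \<le> t" by (auto simp: t')
  have "k \<le> t" using Ft failures_le[of _ t] by metis
  have "(LEAST s. card {j\<in>{1..s+k}. \<not> \<xi> j \<omega>} = k) = t - k"
  proof (rule Least_equality)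
    show "card {j\<in>{1..t-k+k}. \<not> \<xi> j \<omega>} = k"
      using Ft \<open>k \<le> t\<close> by (simp add: failures_def)
  next
    fix s assume "card {j\<in>{1..s+k}. \<not> \<xi> j \<omega>} = k"
    then have "t \<le> s + k" unfolding t_def by (intro Least_le) (simp add: failures_def)
    then show "t - k \<le> s" by simp
  qed
  then show "S_succ \<xi> k \<omega> = t - k" by (simp add: S_succ_def)
qed

lemma I_type_eq_if_renewals:
  assumes R1: "R 1 \<omega> = i 0"
    and renewal: "\<And>t. 1 \<le> t \<Longrightarrow> t \<le> n \<Longrightarrow> \<not> \<xi> t \<omega> \<Longrightarrow> R (Suc t) \<omega> = i (failures (\<lambda>j. \<xi> j \<omega>) t)"
    and "k \<le> failures (\<lambda>j. \<xi> j \<omega>) n"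
  shows "I_type R \<xi> k \<omega> = i k"
proof (cases "k = 0")
  case True
  then show ?thesis using R1 by (simp add: I_type_def)
next
  case False
  define t where "t = (LEAST t. k \<le> failures (\<lambda>j. \<xi> j \<omega>) t)"
  note t = S_succ_eq_failure_time[of k \<xi> \<omega> n, OF _ assms(3), folded t_def]
  have "k \<le> t" using t(2) False failures_le[of _ t] by (metis One_nat_def Suc_leI neq0_conv)
  then have "I_type R \<xi> k \<omega> = R (Suc t) \<omega>" using False t(1) by (simp add: I_type_def)
  also have "\<dots> = i k" using renewal t False by simp
  finally show ?thesis .
qed

definition nfail :: "('n \<times> bool) list \<Rightarrow> nat" where
  "nfail w = length (filter (\<lambda>y. \<not> snd y) w)"

lemma nfail_Nil [simp]: "nfail [] = 0"
  and nfail_Cons [simp]: "nfail (y # w) = nfail w + (if snd y then 0 else 1)"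
  by (simp_all add: nfail_def)

lemma nfail_hist: "nfail (hist r x n) = failures x n"
  by (induction n) (auto simp: failures_Suc)

text \<open>agrees i w: in the history w, the first type and every type drawn right after the k-th
  failure is i k; agrees_next i r w says the same about a type r drawn after w.\<close>

fun agrees_next :: "(nat \<Rightarrow> 'n) \<Rightarrow> 'n \<Rightarrow> ('n \<times> bool) list \<Rightarrow> bool" where
  "agrees_next i r [] \<longleftrightarrow> r = i 0"
| "agrees_next i r (y # w) \<longleftrightarrow> (\<not> snd y \<longrightarrow> r = i (nfail (y # w)))"

fun agrees :: "(nat \<Rightarrow> 'n) \<Rightarrow> ('n \<times> bool) list \<Rightarrow> bool" where
  "agrees i [] \<longleftrightarrow> True"
| "agrees i (y # w) \<longleftrightarrow> agrees i w \<and> agrees_next i (fst y) w"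

lemma agrees_hist_nth:
  "agrees i (hist r x n) \<Longrightarrow> 1 \<le> j \<Longrightarrow> j \<le> n \<Longrightarrow> agrees_next i (r j) (hist r x (j - 1))"
  by (induction n) (auto simp: le_Suc_eq)

definition ends_with_failure :: "('n \<times> bool) list \<Rightarrow> bool" where
  "ends_with_failure h \<longleftrightarrow> (case h of [] \<Rightarrow> False | z # _ \<Rightarrow> \<not> snd z)"

text \<open>renewal_hist i m w: the history w of length n + 1 has its m-th failure at time n, and
  the types drawn at time 1 and after each failure, up to the type drawn at time n + 1, are
  i 0, ..., i m.\<close>

definition renewal_hist :: "(nat \<Rightarrow> 'n) \<Rightarrow> nat \<Rightarrow> ('n \<times> bool) list \<Rightarrow> bool" where
  "renewal_hist i m w \<longleftrightarrow> (case w of [] \<Rightarrow> False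
     | y # h \<Rightarrow> agrees i h \<and> ends_with_failure h \<and> nfail h = m \<and> fst y = i m)"

lemma renewal_hist_Cons:
  "renewal_hist i m (y # h) \<longleftrightarrow> agrees i h \<and> ends_with_failure h \<and> nfail h = m \<and> fst y = i m"
  by (simp add: renewal_hist_def)

lemma renewal_hist_I_type:
  assumes "renewal_hist i m (hist (\<lambda>j. R j \<omega>) (\<lambda>j. \<xi> j \<omega>) (Suc n))"
  shows "\<forall>k\<le>m. I_type R \<xi> k \<omega> = i k" "failures (\<lambda>j. \<xi> j \<omega>) n = m" "\<not> \<xi> n \<omega>"
proof -
  let ?h = "hist (\<lambda>j. R j \<omega>) (\<lambda>j. \<xi> j \<omega>)"
  have agrees: "agrees i (?h n)" and m: "nfail (?h n) = m" and R_next: "R (Suc n) \<omega> = i m"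
    and ends: "ends_with_failure (?h n)"
    using assms by (auto simp: renewal_hist_def)
  obtain n' where n': "n = Suc n'" using ends by (cases n) (auto simp: ends_with_failure_def)
  show Fn: "failures (\<lambda>j. \<xi> j \<omega>) n = m" using m by (simp add: nfail_hist)
  show "\<not> \<xi> n \<omega>" using ends by (simp add: n' ends_with_failure_def)
  have "R (Suc t) \<omega> = i (failures (\<lambda>j. \<xi> j \<omega>) t)"
    if t: "1 \<le> t" "t \<le> n" "\<not> \<xi> t \<omega>" for t
  proof (cases "t = n")
    case True
    then show ?thesis using R_next Fn by simp
  next
    case False
    then have "agrees_next i (R (Suc t) \<omega>) (?h t)"
      using agrees_hist_nth[OF agrees, of "Suc t"] t by simp
    then show ?thesis using t(1,3) by (cases t) (auto simp: nfail_hist failures_Suc)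
  qed
  moreover have "R 1 \<omega> = i 0"
    using agrees_hist_nth[OF agrees, of 1] n' by simp
  ultimately show "\<forall>k\<le>m. I_type R \<xi> k \<omega> = i k"
    using I_type_eq_if_renewals[of R \<omega> i n \<xi>] Fn by auto
qed

lemma list_all_snd_hist: "list_all snd (hist r x n) \<longleftrightarrow> (\<forall>j\<in>{1..n}. x j)"
proof (induction n)
  case (Suc n)
  have "{1..Suc n} = insert (Suc n) {1..n}" by auto
  then show ?case using Suc by auto
qed simp

lemma G_succ_1: "G_succ \<xi> 1 = S_succ \<xi> 1"
proof -
  have "S_succ \<xi> 0 \<omega> = 0" for \<omega> unfolding S_succ_def by (rule Least_eq_0) simp
  then show ?thesis by (simp add: fun_eq_iff G_succ_def)
qed

lemma G_succ_1_gt_iff: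
  assumes "1 \<le> j" "\<not> \<xi> j \<omega>"
  shows "t < G_succ \<xi> 1 \<omega> \<longleftrightarrow> (\<forall>j\<in>{1..Suc t}. \<xi> j \<omega>)"
proof -
  define t0 where "t0 = (LEAST t. 1 \<le> failures (\<lambda>j. \<xi> j \<omega>) t)"
  have "1 \<le> failures (\<lambda>j. \<xi> j \<omega>) j"
    using assms by (intro failures_pos) auto
  note first = S_succ_eq_failure_time[of 1 \<xi> \<omega> j, OF order_refl this, folded t0_def]
  have G: "G_succ \<xi> 1 \<omega> = t0 - 1" unfolding G_succ_1 by (rule first(1))
  have t0_le: "t0 \<le> l" if "1 \<le> l" "\<not> \<xi> l \<omega>" for l
    unfolding t0_def using that by (intro Least_le failures_pos) auto
  show ?thesis
  proof
    assume "t < G_succ \<xi> 1 \<omega>"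
    then show "\<forall>j\<in>{1..Suc t}. \<xi> j \<omega>" using G t0_le by force
  next
    assume "\<forall>j\<in>{1..Suc t}. \<xi> j \<omega>"
    then have "\<not> t0 \<le> Suc t" using first(3,4) by auto
    then show "t < G_succ \<xi> 1 \<omega>" using G by simp
  qed
qed

section \<open>Probabilities of histories\<close>

lemma (in prob_space) prob_eq_if_lower_bounds_sum_1:
  assumes L: "finite L" and disj: "disjoint_family_on E L" and sets: "E ` L \<subseteq> events"
    and le: "\<And>l. l \<in> L \<Longrightarrow> f l \<le> prob (E l)" and sum_1: "(\<Sum>l\<in>L. f l) = 1" and "l \<in> L"
  shows "prob (E l) = f l"
proof -
  have "(\<Sum>l\<in>L. prob (E l)) = prob (\<Union>l\<in>L. E l)"
    using L disj sets by (intro finite_measure_finite_Union[symmetric])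
  also have "\<dots> \<le> 1" by (rule prob_le_1)
  finally have "(\<Sum>l\<in>L. prob (E l) - f l) \<le> 0"
    using sum_1 by (simp add: sum_subtractf)
  moreover have "0 \<le> (\<Sum>l\<in>L. prob (E l) - f l)"
    using le by (intro sum_nonneg) auto
  ultimately have "(\<Sum>l\<in>L. prob (E l) - f l) = 0" by simp
  then have "\<forall>l\<in>L. prob (E l) - f l = 0"
    using sum_nonneg_eq_0_iff[OF L, of "\<lambda>l. prob (E l) - f l"] le by auto
  then show ?thesis using \<open>l \<in> L\<close> by simp
qed

definition coin_prob :: "real^'n \<Rightarrow> 'n \<times> bool \<Rightarrow> real" where
  "coin_prob p y = (if snd y then p $ fst y else 1 - p $ fst y)"

locale cookie_space = cookie_kernel K p
  for K :: "real^'n^'n" and p :: "real^'n" +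
  fixes M :: "'w measure" and R :: "nat \<Rightarrow> 'w \<Rightarrow> 'n" and \<xi> :: "nat \<Rightarrow> 'w \<Rightarrow> bool"
    and \<eta> :: "real^'n"
  assumes process: "cookie_process M R \<xi> K p \<eta>"
begin

sublocale prob_space M
  using process by (simp add: cookie_process_def)

abbreviation history :: "nat \<Rightarrow> 'w \<Rightarrow> ('n \<times> bool) list" where
  "history n \<omega> \<equiv> hist (\<lambda>j. R j \<omega>) (\<lambda>j. \<xi> j \<omega>) n"

text \<open>next_weight r w is the probability that the history is w and the next type drawn is r.\<close>

fun next_weight :: "'n \<Rightarrow> ('n \<times> bool) list \<Rightarrow> real" where
  "next_weight r [] = \<eta> $ r"
| "next_weight r (y # w) = next_weight (fst y) w * coin_prob p y * K $ fst y $ r"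

fun hist_weight :: "('n \<times> bool) list \<Rightarrow> real" where
  "hist_weight [] = 1"
| "hist_weight (y # w) = next_weight (fst y) w * coin_prob p y"

lemma hist_weight_hist:
  assumes "1 \<le> n"
  shows "hist_weight (hist r x n) = \<eta> $ r 1 * (\<Prod>j\<in>{1..<n}. K $ r j $ r (Suc j))
           * (\<Prod>j\<in>{1..n}. if x j then p $ r j else 1 - p $ r j)"
  using assms
proof (induction n rule: dec_induct)
  case base
  then show ?case by (simp add: coin_prob_def)
next
  case (step n)
  obtain n' where n': "n = Suc n'" using step(1) by (cases n) auto
  have "hist_weight (hist r x (Suc n)) = hist_weight (hist r x n) * K $ r n $ r (Suc n)
      * coin_prob p (r (Suc n), x (Suc n))"
    by (simp add: n')
  also have "\<dots> = \<eta> $ r 1 * ((\<Prod>j\<in>{1..<n}. K $ r j $ r (Suc j)) * K $ r n $ r (Suc n))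
      * ((\<Prod>j\<in>{1..n}. if x j then p $ r j else 1 - p $ r j) * coin_prob p (r (Suc n), x (Suc n)))"
    using step(3) by (simp add: algebra_simps)
  also have "\<dots> = \<eta> $ r 1 * (\<Prod>j\<in>{1..<Suc n}. K $ r j $ r (Suc j))
      * (\<Prod>j\<in>{1..Suc n}. if x j then p $ r j else 1 - p $ r j)"
    using step(1) by (simp add: coin_prob_def prod.nat_ivl_Suc')
  finally show ?case .
qed

lemma measurable_history: "history n \<in> measurable M (count_space UNIV)"
proof (induction n)
  case 0
  then show ?case by simp
next
  case (Suc n)
  have R: "R j \<in> measurable M (count_space UNIV)" and \<xi>: "\<xi> j \<in> measurable M (count_space UNIV)" for j
    using process by (simp_all add: cookie_process_def)
  have "(\<lambda>\<omega>. (\<lambda>b \<omega>. (r, b) # w) (\<xi> (Suc n) \<omega>) \<omega>) \<in> measurable M (count_space UNIV)" for r w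
    by (rule measurable_compose_countable[OF _ \<xi>]) simp
  then have "(\<lambda>\<omega>. (\<lambda>r \<omega>. (r, \<xi> (Suc n) \<omega>) # w) (R (Suc n) \<omega>) \<omega>) \<in> measurable M (count_space UNIV)" for w
    by (rule measurable_compose_countable[OF _ R])
  then have "(\<lambda>\<omega>. (\<lambda>w \<omega>. (R (Suc n) \<omega>, \<xi> (Suc n) \<omega>) # w) (history n \<omega>) \<omega>)
      \<in> measurable M (count_space UNIV)"
    by (rule measurable_compose_countable[OF _ Suc.IH])
  then show ?case by simp
qed

lemma sets_history: "{\<omega>\<in>space M. P (history n \<omega>)} \<in> sets M"
  using measurable_sets[OF measurable_history, of "{w. P w}" n] by (simp add: vimage_def Int_def conj_commute)

lemma measure_history_eq: "measure M {\<omega>\<in>space M. history (length w) \<omega> = w} = hist_weight w"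
proof (cases "w = []")
  case True
  then show ?thesis by (simp add: prob_space)
next
  case False
  define n where "n = length w"
  obtain r x where w: "w = hist r x n" using hist_surj unfolding n_def by blast
  have "1 \<le> n" using False by (simp add: n_def Suc_le_eq)
  then have "measure M {\<omega>\<in>space M. \<forall>j\<in>{1..n}. R j \<omega> = r j \<and> \<xi> j \<omega> = x j} = hist_weight w"
    using process unfolding cookie_process_def w by (simp add: hist_weight_hist)
  moreover have "{\<omega>\<in>space M. history n \<omega> = w}
      = {\<omega>\<in>space M. \<forall>j\<in>{1..n}. R j \<omega> = r j \<and> \<xi> j \<omega> = x j}"
    by (simp add: w hist_eq_iff)
  ultimately show ?thesis by (simp add: n_def)
qed

lemma measure_history_pred:
  "measure M {\<omega>\<in>space M. P (history n \<omega>)} = (\<Sum>w | length w = n. if P w then hist_weight w else 0)"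
proof -
  let ?S = "{w. length w = n \<and> P w}"
  have "finite ?S" using finite_lists_length[of n] by (rule rev_finite_subset) auto
  have "{\<omega>\<in>space M. P (history n \<omega>)} = (\<Union>w\<in>?S. {\<omega>\<in>space M. history n \<omega> = w})" by auto
  then have "measure M {\<omega>\<in>space M. P (history n \<omega>)}
      = (\<Sum>w\<in>?S. measure M {\<omega>\<in>space M. history n \<omega> = w})"
    using sets_history[of "\<lambda>v. v = _"]
    by (simp only:) (rule finite_measure_finite_Union[OF \<open>finite ?S\<close>], auto simp: disjoint_family_on_def)
  also have "\<dots> = (\<Sum>w\<in>?S. hist_weight w)"
    using measure_history_eq by (intro sum.cong) auto
  also have "\<dots> = (\<Sum>w | length w = n. if P w then hist_weight w else 0)"
    using sum.inter_filter[OF finite_lists_length, where g = hist_weight and P = P] by simp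
  finally show ?thesis .
qed

lemma initial_nonneg: "0 \<le> \<eta> $ r"
proof -
  have "0 \<le> measure M {\<omega>\<in>space M. history (length [(r, True)]) \<omega> = [(r, True)]}" by simp
  then have "0 \<le> \<eta> $ r * p $ r"
    by (simp only: measure_history_eq) (simp add: coin_prob_def)
  then show ?thesis using p_bounds[of r] by (simp add: zero_le_mult_iff)
qed

lemma initial_sum: "(\<Sum>r\<in>UNIV. \<eta> $ r) = 1"
proof -
  have "(\<Sum>w | length w = 1. hist_weight w) = 1"
    using measure_history_pred[of "\<lambda>w. True" 1] prob_space by simp
  then show ?thesis
    by (simp add: sum_lists_length_Suc_bool[of _ 0, simplified] coin_prob_def algebra_simps)
qed

lemma next_weight_nonneg: "0 \<le> next_weight r w"
  by (induction w arbitrary: r)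
    (use initial_nonneg K_nonneg p_bounds in \<open>auto simp: coin_prob_def less_imp_le\<close>)

section \<open>The Markov property of the types after failures\<close>

definition path_prob :: "(nat \<Rightarrow> 'n) \<Rightarrow> nat \<Rightarrow> real" where
  "path_prob i m = \<eta> $ i 0 * (\<Prod>k<m. Pi_mat K p $ i k $ i (Suc k))"

text \<open>occupation i n k r is the probability that the first n draws contain exactly k failures and
  agree with i, and that the type drawn at time n + 1 is r and agrees with i.\<close>

definition occupation :: "(nat \<Rightarrow> 'n) \<Rightarrow> nat \<Rightarrow> nat \<Rightarrow> 'n \<Rightarrow> real" where
  "occupation i n k r = (\<Sum>w | length w = n.
     if agrees i w \<and> agrees_next i r w \<and> nfail w = k then next_weight r w else 0)"

lemma occupation_nonneg: "0 \<le> occupation i n k r"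
  unfolding occupation_def by (intro sum_nonneg) (simp add: next_weight_nonneg)

lemma occupation_0: "occupation i 0 k r = (if k = 0 \<and> r = i 0 then \<eta> $ r else 0)"
  by (simp add: occupation_def)

lemma occupation_Suc:
  "occupation i (Suc n) k r' = (\<Sum>r\<in>UNIV. occupation i n k r * p $ r * K $ r $ r')
     + (if 0 < k \<and> r' = i k then (\<Sum>r\<in>UNIV. occupation i n (k - 1) r * (1 - p $ r) * K $ r $ r') else 0)"
proof -
  have success: "(if agrees i ((r, True) # w) \<and> agrees_next i r' ((r, True) # w) \<and> nfail ((r, True) # w) = k
        then next_weight r' ((r, True) # w) else 0)
      = (if agrees i w \<and> agrees_next i r w \<and> nfail w = k then next_weight r w else 0) * p $ r * K $ r $ r'"
    for r w by (simp add: coin_prob_def)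
  have failure: "(if agrees i ((r, False) # w) \<and> agrees_next i r' ((r, False) # w) \<and> nfail ((r, False) # w) = k
        then next_weight r' ((r, False) # w) else 0)
      = (if 0 < k \<and> r' = i k then (if agrees i w \<and> agrees_next i r w \<and> nfail w = k - 1
           then next_weight r w else 0) * (1 - p $ r) * K $ r $ r' else 0)"
    for r w
  proof -
    have "(agrees i ((r, False) # w) \<and> agrees_next i r' ((r, False) # w) \<and> nfail ((r, False) # w) = k)
        \<longleftrightarrow> (0 < k \<and> r' = i k) \<and> (agrees i w \<and> agrees_next i r w \<and> nfail w = k - 1)"
      by auto
    moreover have "next_weight r' ((r, False) # w) = next_weight r w * (1 - p $ r) * K $ r $ r'"
      by (simp add: coin_prob_def)
    ultimately show ?thesis by (simp only:) auto
  qed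
  have "occupation i (Suc n) k r' = (\<Sum>r\<in>UNIV. occupation i n k r * p $ r * K $ r $ r'
      + (if 0 < k \<and> r' = i k then occupation i n (k - 1) r * (1 - p $ r) * K $ r $ r' else 0))"
    unfolding occupation_def sum_lists_length_Suc_bool success failure
    by (intro sum.cong refl arg_cong2[where f = "(+)"])
      (simp_all add: sum_distrib_right)
  then show ?thesis
    by (simp add: sum.distrib)
qed

text \<open>Exiting level k through a failure after which type i (k + 1) is drawn contributes one more
  factor of Pi_mat K p = green_mat K p ** (diag_mat (1 - p) ** K).\<close>

lemma exit_sums:
  assumes "\<And>r. (\<lambda>n. occupation i n k r) sums (path_prob i k * green_mat K p $ i k $ r)"
  shows "(\<lambda>n. \<Sum>r\<in>UNIV. occupation i n k r * (1 - p $ r) * K $ r $ i (Suc k)) sums path_prob i (Suc k)"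
proof -
  have "(\<lambda>n. \<Sum>r\<in>UNIV. occupation i n k r * (1 - p $ r) * K $ r $ i (Suc k))
      sums (\<Sum>r\<in>UNIV. path_prob i k * green_mat K p $ i k $ r * (1 - p $ r) * K $ r $ i (Suc k))"
    using assms by (intro sums_sum sums_mult2) (simp add: mult.assoc)
  also have "(\<Sum>r\<in>UNIV. path_prob i k * green_mat K p $ i k $ r * (1 - p $ r) * K $ r $ i (Suc k))
      = path_prob i k * Pi_mat K p $ i k $ i (Suc k)"
    by (simp add: Pi_mat_def matrix_matrix_mult_def[of "green_mat K p"] diag_mat_mult_nth
        sum_distrib_left ac_simps)
  also have "\<dots> = path_prob i (Suc k)"
    by (simp add: path_prob_def)
  finally show ?thesis .
qed

lemma occupation_sums: "(\<lambda>n. occupation i n k r) sums (path_prob i k * green_mat K p $ i k $ r)"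
proof (induction k arbitrary: r)
  case 0
  define x where "x n = (\<chi> r. occupation i n 0 r)" for n
  have "x (Suc n) = x n v* (diag_mat p ** K) + 0" for n
    by (simp add: x_def vec_eq_iff occupation_Suc vector_matrix_mult_nth diag_mat_mult_nth mult.assoc)
  then have "(\<lambda>n. x n $ r) sums ((x 0 + 0) v* green_mat K p) $ r"
    by (intro success_recursion_sums[where u = "\<lambda>_. 0"]) (auto simp: x_def occupation_nonneg)
  moreover have "x 0 = \<eta> $ i 0 *s axis (i 0) 1"
    by (simp add: x_def occupation_0 vec_eq_iff axis_def)
  ultimately show ?case
    by (simp add: x_def path_prob_def scalar_vector_matrix_assoc axis_vector_matrix_mult)
next
  case (Suc k)
  define x where "x n = (\<chi> r. occupation i n (Suc k) r)" for n
  define c where "c n = (\<Sum>r\<in>UNIV. occupation i n k r * (1 - p $ r) * K $ r $ i (Suc k))" for n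
  define u :: "nat \<Rightarrow> real^'n" where "u n = c n *s axis (i (Suc k)) 1" for n
  have "x (Suc n) = x n v* (diag_mat p ** K) + u n" for n
    by (simp add: x_def u_def c_def vec_eq_iff occupation_Suc vector_matrix_mult_nth
        diag_mat_mult_nth mult.assoc axis_def)
  moreover have "0 \<le> c n" for n
    unfolding c_def using occupation_nonneg K_nonneg p_bounds
    by (intro sum_nonneg mult_nonneg_nonneg) (auto simp: less_imp_le)
  moreover have "c sums path_prob i (Suc k)"
    unfolding c_def by (rule exit_sums[OF Suc.IH])
  ultimately have "(\<lambda>n. x n $ r) sums ((x 0 + path_prob i (Suc k) *s axis (i (Suc k)) 1) v* green_mat K p) $ r"
    by (intro success_recursion_sums) (auto simp: x_def u_def occupation_nonneg axis_def sums_mult2)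
  moreover have "x 0 = 0"
    by (simp add: x_def occupation_0 vec_eq_iff)
  ultimately show ?case
    by (simp add: x_def scalar_vector_matrix_assoc axis_vector_matrix_mult)
qed

lemma measurable_S_succ: "S_succ \<xi> k \<in> measurable M (count_space UNIV)"
proof -
  have "S_succ \<xi> k = (\<lambda>\<omega>. LEAST s. (\<lambda>s \<omega>. nfail (history (s + k) \<omega>) = k) s \<omega>)"
    by (simp add: fun_eq_iff S_succ_def nfail_hist failures_def)
  moreover have "(\<lambda>\<omega>. (\<lambda>w. nfail w = k) (history (s + k) \<omega>)) \<in> measurable M (count_space UNIV)" for s
    by (rule measurable_compose[OF measurable_history]) simp
  then have "(\<lambda>\<omega>. LEAST s. (\<lambda>s \<omega>. nfail (history (s + k) \<omega>) = k) s \<omega>) \<in> measurable M (count_space UNIV)"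
    by (intro measurable_Least) simp
  ultimately show ?thesis by simp
qed

lemma measurable_I_type: "I_type R \<xi> k \<in> measurable M (count_space UNIV)"
proof -
  have R: "R j \<in> measurable M (count_space UNIV)" for j
    using process by (simp add: cookie_process_def)
  have "(\<lambda>\<omega>. (\<lambda>s \<omega>. R (if k = 0 then 1 else s + k + 1) \<omega>) (S_succ \<xi> k \<omega>) \<omega>) \<in> measurable M (count_space UNIV)"
    by (rule measurable_compose_countable[OF R measurable_S_succ])
  then show ?thesis by (simp add: I_type_def[abs_def] if_distrib[of "\<lambda>j. R j _"] cong: if_cong)
qed

definition I_event :: "(nat \<Rightarrow> 'n) \<Rightarrow> nat \<Rightarrow> 'w set" where
  "I_event i m = {\<omega>\<in>space M. \<forall>k\<le>m. I_type R \<xi> k \<omega> = i k}"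

lemma sets_I_event: "I_event i m \<in> sets M"
proof -
  have "{\<omega>\<in>space M. I_type R \<xi> k \<omega> = i k} \<in> sets M" for k
    using measurable_sets[OF measurable_I_type, of "{i k}" k] by (simp add: vimage_def Int_def conj_commute)
  then have "(\<Inter>k\<le>m. {\<omega>\<in>space M. I_type R \<xi> k \<omega> = i k}) \<in> sets M"
    by (intro sets.finite_INT) auto
  moreover have "I_event i m = (\<Inter>k\<le>m. {\<omega>\<in>space M. I_type R \<xi> k \<omega> = i k})"
    unfolding I_event_def by auto
  ultimately show ?thesis by simp
qed

definition renewal_weight :: "(nat \<Rightarrow> 'n) \<Rightarrow> nat \<Rightarrow> nat \<Rightarrow> real" where
  "renewal_weight i m n = (\<Sum>h | length h = n.
     if agrees i h \<and> ends_with_failure h \<and> nfail h = m then next_weight (i m) h else 0)"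

lemma measure_renewal_event:
  "measure M {\<omega>\<in>space M. renewal_hist i m (history (Suc n) \<omega>)} = renewal_weight i m n"
proof -
  have "(if renewal_hist i m ((r, True) # h) then hist_weight ((r, True) # h) else 0)
      + (if renewal_hist i m ((r, False) # h) then hist_weight ((r, False) # h) else 0)
      = (if r = i m then (if agrees i h \<and> ends_with_failure h \<and> nfail h = m
           then next_weight (i m) h else 0) else 0)" for r h
    by (auto simp: renewal_hist_Cons coin_prob_def algebra_simps)
  then have "measure M {\<omega>\<in>space M. renewal_hist i m (history (Suc n) \<omega>)}
      = (\<Sum>r\<in>UNIV. \<Sum>h | length h = n. if r = i m then (if agrees i h \<and> ends_with_failure h
           \<and> nfail h = m then next_weight (i m) h else 0) else 0)"
    unfolding measure_history_pred sum_lists_length_Suc_bool sum.distrib[symmetric] by simp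
  also have "\<dots> = (\<Sum>r\<in>UNIV. if r = i m then renewal_weight i m n else 0)"
    by (intro sum.cong) (auto simp: renewal_weight_def)
  finally show ?thesis by simp
qed

lemma renewal_weight_0: "renewal_weight i m 0 = 0"
  by (simp add: renewal_weight_def ends_with_failure_def)

lemma renewal_weight_Suc:
  assumes "1 \<le> m"
  shows "renewal_weight i m (Suc n)
    = (\<Sum>r\<in>UNIV. occupation i n (m - 1) r * (1 - p $ r) * K $ r $ i m)"
proof -
  have success: "(if agrees i ((r, True) # h) \<and> ends_with_failure ((r, True) # h) \<and> nfail ((r, True) # h) = m
      then next_weight (i m) ((r, True) # h) else 0) = 0" for r h
    by (simp add: ends_with_failure_def)
  have failure: "(if agrees i ((r, False) # h) \<and> ends_with_failure ((r, False) # h) \<and> nfail ((r, False) # h) = m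
      then next_weight (i m) ((r, False) # h) else 0)
      = (if agrees i h \<and> agrees_next i r h \<and> nfail h = m - 1 then next_weight r h else 0)
        * (1 - p $ r) * K $ r $ i m" for r h
  proof -
    have "agrees i ((r, False) # h) \<and> ends_with_failure ((r, False) # h) \<and> nfail ((r, False) # h) = m
        \<longleftrightarrow> agrees i h \<and> agrees_next i r h \<and> nfail h = m - 1"
      using assms by (auto simp: ends_with_failure_def)
    moreover have "next_weight (i m) ((r, False) # h) = next_weight r h * (1 - p $ r) * K $ r $ i m"
      by (simp add: coin_prob_def)
    ultimately show ?thesis by simp
  qed
  show ?thesis
    unfolding renewal_weight_def sum_lists_length_Suc_bool success failure
    by (simp add: occupation_def sum_distrib_right)
qed

lemma disjoint_renewal_events:
  "disjoint_family (\<lambda>n. {\<omega>\<in>space M. renewal_hist i m (history (Suc n) \<omega>)})"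
  unfolding disjoint_family_on_def
proof (intro ballI impI equals0I)
  fix a b :: nat and \<omega>
  assume "a \<noteq> b" and "\<omega> \<in> {\<omega>\<in>space M. renewal_hist i m (history (Suc a) \<omega>)}
      \<inter> {\<omega>\<in>space M. renewal_hist i m (history (Suc b) \<omega>)}"
  then have "renewal_hist i m (history (Suc a) \<omega>)" "renewal_hist i m (history (Suc b) \<omega>)"
    by auto
  note A = renewal_hist_I_type(2,3)[where R = R and \<xi> = \<xi>, OF this(1)]
    and B = renewal_hist_I_type(2,3)[where R = R and \<xi> = \<xi>, OF this(2)]
  show False
    using \<open>a \<noteq> b\<close> failure_time_unique[OF _ A(1) B] failure_time_unique[OF _ B(1) A]
    by (cases "a < b") auto
qed

lemma path_prob_le_measure_I_event:
  assumes "1 \<le> m"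
  shows "path_prob i m \<le> measure M (I_event i m)"
proof -
  define F where "F n = {\<omega>\<in>space M. renewal_hist i m (history (Suc n) \<omega>)}" for n
  have "range F \<subseteq> sets M" unfolding F_def using sets_history by blast
  then have "(\<lambda>n. measure M (F n)) sums measure M (\<Union>n. F n)"
    using disjoint_renewal_events[of i m] unfolding F_def[symmetric] by (rule finite_measure_UNION)
  moreover have "(\<lambda>n. measure M (F n)) sums path_prob i m"
  proof -
    obtain k where m: "m = Suc k" using assms by (cases m) auto
    have "(\<lambda>n. measure M (F (Suc n))) sums path_prob i m"
      unfolding F_def measure_renewal_event renewal_weight_Suc[OF assms]
      using exit_sums[OF occupation_sums, of i k] by (simp add: m)
    then have "(\<lambda>n. measure M (F n)) sums (path_prob i m + measure M (F 0))"
      by (rule iffD1[OF sums_Suc_iff])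
    then show ?thesis
      by (simp only: F_def measure_renewal_event renewal_weight_0 add_0_right)
  qed
  ultimately have "measure M (\<Union>n. F n) = path_prob i m" by (rule sums_unique2)
  moreover have "(\<Union>n. F n) \<subseteq> I_event i m"
    unfolding F_def I_event_def using renewal_hist_I_type(1)[of i m R _ \<xi>] by blast
  then have "measure M (\<Union>n. F n) \<le> measure M (I_event i m)"
    by (rule finite_measure_mono[OF _ sets_I_event])
  ultimately show ?thesis by simp
qed

lemma measure_I_event_0: "measure M (I_event i 0) = path_prob i 0"
proof -
  have "I_event i 0 = {\<omega>\<in>space M. fst (hd (history 1 \<omega>)) = i 0}"
    by (auto simp: I_event_def I_type_def)
  then have "measure M (I_event i 0)
      = (\<Sum>w | length w = Suc 0. if fst (hd w) = i 0 then hist_weight w else 0)"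
    using measure_history_pred[of "\<lambda>w. fst (hd w) = i 0" 1] by simp
  also have "\<dots> = (\<Sum>r\<in>UNIV. if r = i 0 then \<eta> $ r else 0)"
    unfolding sum_lists_length_Suc_bool by (intro sum.cong) (auto simp: coin_prob_def algebra_simps)
  finally show ?thesis by (simp add: path_prob_def)
qed

lemma path_prob_le_measure: "path_prob i m \<le> measure M (I_event i m)"
  using path_prob_le_measure_I_event[of m i] measure_I_event_0[of i] by (cases m) auto

lemma sum_Pi_mat_paths:
  "(\<Sum>l | length l = n. \<Prod>k<n. Pi_mat K p $ ((a # l) ! k) $ (l ! k)) = 1"
proof (induction n arbitrary: a)
  case (Suc n)
  have "(\<Sum>l | length l = Suc n. \<Prod>k<Suc n. Pi_mat K p $ ((a # l) ! k) $ (l ! k))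
      = (\<Sum>b\<in>UNIV. Pi_mat K p $ a $ b
           * (\<Sum>l | length l = n. \<Prod>k<n. Pi_mat K p $ ((b # l) ! k) $ (l ! k)))"
    by (simp only: sum_lists_length_Suc prod.lessThan_Suc_shift nth_Cons_0 nth_Cons_Suc sum_distrib_left)
  then show ?case by (simp only: Suc.IH mult_1_right Pi_mat_row_sum)
qed simp

lemma sum_path_prob: "(\<Sum>l | length l = Suc m. path_prob ((!) l) m) = 1"
proof -
  have "(\<Sum>l | length l = Suc m. path_prob ((!) l) m)
      = (\<Sum>a\<in>UNIV. \<eta> $ a * (\<Sum>l | length l = m. \<Prod>k<m. Pi_mat K p $ ((a # l) ! k) $ (l ! k)))"
    by (simp add: sum_lists_length_Suc path_prob_def sum_distrib_left)
  then show ?thesis by (simp only: sum_Pi_mat_paths mult_1_right initial_sum)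
qed

lemma disjoint_I_event:
  "disjoint_family_on (\<lambda>l. I_event ((!) l) m) {l. length l = Suc m}"
  unfolding disjoint_family_on_def
proof (intro ballI impI)
  fix l l' :: "'n list" assume "l \<in> {l. length l = Suc m}" "l' \<in> {l. length l = Suc m}" "l \<noteq> l'"
  then obtain k where k: "k < Suc m" "l ! k \<noteq> l' ! k"
    by (auto simp: list_eq_iff_nth_eq)
  show "I_event ((!) l) m \<inter> I_event ((!) l') m = {}"
  proof (rule equals0I)
    fix \<omega> assume "\<omega> \<in> I_event ((!) l) m \<inter> I_event ((!) l') m"
    then have "I_type R \<xi> k \<omega> = l ! k" "I_type R \<xi> k \<omega> = l' ! k"
      using k(1) by (auto simp: I_event_def)
    then show False using k(2) by simp
  qed
qed

lemma measure_I_event: "measure M (I_event i m) = path_prob i m"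
proof -
  define l0 where "l0 = map i [0..<Suc m]"
  have l0: "l0 ! k = i k" if "k \<le> m" for k
    using that unfolding l0_def by (subst nth_map_upt) auto
  have "measure M (I_event ((!) l0) m) = path_prob ((!) l0) m"
  proof (rule prob_eq_if_lower_bounds_sum_1[OF finite_lists_length disjoint_I_event])
    show "(\<lambda>l. I_event ((!) l) m) ` {l. length l = Suc m} \<subseteq> events"
      using sets_I_event by auto
  qed (auto simp: path_prob_le_measure sum_path_prob l0_def)
  moreover have "I_event ((!) l0) m = I_event i m" "path_prob ((!) l0) m = path_prob i m"
    using l0 by (auto simp: I_event_def path_prob_def intro: prod.cong)
  ultimately show ?thesis by simp
qed

lemma measure_I_type_eq:
  "measure M {\<omega>\<in>space M. \<forall>k\<le>m. I_type R \<xi> k \<omega> = i k}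
     = \<eta> $ i 0 * (\<Prod>k<m. Pi_mat K p $ i k $ i (Suc k))"
  using measure_I_event by (simp add: I_event_def path_prob_def)

section \<open>The mean number of successes before the first failure\<close>

definition success_weight :: "nat \<Rightarrow> 'n \<Rightarrow> real" where
  "success_weight t r = (\<Sum>h | length h = t. if list_all snd h then next_weight r h else 0)"

lemma success_weight_Suc:
  "success_weight (Suc t) r' = (\<Sum>r\<in>UNIV. success_weight t r * p $ r * K $ r $ r')"
  unfolding success_weight_def sum_lists_length_Suc_bool
  by (simp add: coin_prob_def sum_distrib_right if_distrib[of "\<lambda>x. x * _"] cong: if_cong)

lemma success_weight_sums: "(\<lambda>t. success_weight t r) sums (\<eta> v* green_mat K p) $ r"
proof -
  define x where "x t = (\<chi> r. success_weight t r)" for t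
  have "x (Suc t) = x t v* (diag_mat p ** K) + 0" for t
    by (simp add: x_def vec_eq_iff success_weight_Suc vector_matrix_mult_nth diag_mat_mult_nth mult.assoc)
  then have "(\<lambda>t. x t $ r) sums ((x 0 + 0) v* green_mat K p) $ r"
    by (intro success_recursion_sums[where u = "\<lambda>_. 0"])
      (auto simp: x_def success_weight_def next_weight_nonneg intro: sum_nonneg)
  moreover have "x 0 = \<eta>" by (simp add: x_def success_weight_def vec_eq_iff)
  ultimately show ?thesis by (simp add: x_def)
qed

definition success_event :: "nat \<Rightarrow> 'w set" where
  "success_event t = {\<omega>\<in>space M. list_all snd (history (Suc t) \<omega>)}"

lemma sets_success_event: "success_event t \<in> sets M"
  unfolding success_event_def by (rule sets_history)

lemma success_event_sums: "(\<lambda>t. measure M (success_event t)) sums ((\<eta> v* green_mat K p) \<bullet> p)"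
proof -
  have "measure M (success_event t) = (\<Sum>r\<in>UNIV. success_weight t r * p $ r)" for t
    unfolding success_event_def measure_history_pred sum_lists_length_Suc_bool
    by (simp add: success_weight_def coin_prob_def sum_distrib_right if_distrib[of "\<lambda>x. x * _"]
        cong: if_cong)
  moreover have "(\<lambda>t. \<Sum>r\<in>UNIV. success_weight t r * p $ r) sums (\<Sum>r\<in>UNIV. (\<eta> v* green_mat K p) $ r * p $ r)"
    by (intro sums_sum sums_mult2 success_weight_sums)
  ultimately show ?thesis by (simp add: inner_vec_def)
qed

lemma failure_AE: "AE \<omega> in M. \<exists>j\<ge>1. \<not> \<xi> j \<omega>"
proof -
  define N where "N = {\<omega>\<in>space M. \<forall>n. list_all snd (history n \<omega>)}"
  have N_sets: "N \<in> sets M"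
    unfolding N_def by (intro sets.sets_Collect_countable_All sets_history)
  have "N \<subseteq> success_event t" for t unfolding N_def success_event_def by blast
  then have "measure M N \<le> measure M (success_event t)" for t
    using sets_success_event by (intro finite_measure_mono)
  moreover have "(\<lambda>t. measure M (success_event t)) \<longlonglongrightarrow> 0"
    using success_event_sums by (intro summable_LIMSEQ_zero) (simp add: sums_iff)
  ultimately have "measure M N \<le> 0" by (intro LIMSEQ_le_const) auto
  then have "N \<in> null_sets M"
    using N_sets by (simp add: null_sets_def emeasure_eq_measure measure_nonneg antisym)
  then show ?thesis
    by (rule AE_I') (auto simp: N_def list_all_snd_hist)
qed

lemma nn_integral_G_succ_1:
  "(\<integral>\<^sup>+ \<omega>. ennreal (real (G_succ \<xi> 1 \<omega>)) \<partial>M) = ennreal ((\<eta> v* green_mat K p) \<bullet> p)"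
proof -
  have G_meas: "G_succ \<xi> 1 \<in> measurable M (count_space UNIV)"
    unfolding G_succ_1 by (rule measurable_S_succ)
  have "emeasure M {\<omega>\<in>space M. t < G_succ \<xi> 1 \<omega>} = emeasure M (success_event t)" for t
  proof (rule emeasure_eq_AE)
    show "AE \<omega> in M. \<omega> \<in> {\<omega>\<in>space M. t < G_succ \<xi> 1 \<omega>} \<longleftrightarrow> \<omega> \<in> success_event t"
      using failure_AE
    proof eventually_elim
      case (elim \<omega>)
      then obtain j where "1 \<le> j" "\<not> \<xi> j \<omega>" by blast
      from G_succ_1_gt_iff[of j \<xi> \<omega> t, OF this] show ?case
        unfolding success_event_def list_all_snd_hist hist.simps(2)[symmetric] by blast
    qed
    show "{\<omega>\<in>space M. t < G_succ \<xi> 1 \<omega>} \<in> sets M"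
      using measurable_sets[OF G_meas, of "{t<..}"] by (simp add: vimage_def Int_def conj_commute)
    show "success_event t \<in> sets M" by (rule sets_success_event)
  qed
  then have "(\<integral>\<^sup>+ \<omega>. ennreal (real (G_succ \<xi> 1 \<omega>)) \<partial>M) = (\<Sum>t. ennreal (measure M (success_event t)))"
    using nn_integral_nat_function[OF G_meas]
    by (simp add: ennreal_of_nat_eq_real_of_nat emeasure_eq_measure)
  also have "\<dots> = ennreal ((\<eta> v* green_mat K p) \<bullet> p)"
    using success_event_sums by (simp add: suminf_ennreal2 sums_iff)
  finally show ?thesis .
qed

end

theorem lemma3p2:
  fixes K :: "real^'n^'n" and p \<mu> :: "real^'n"
  assumes "stochastic_matrix K"
    and "unique_closed_irreducible K"
    and "\<And>i. 0 < p $ i \<and> p $ i < 1"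
    and "stationary_dist K \<mu>"
  defines "pbar \<equiv> \<mu> \<bullet> p"
  defines "lam \<equiv> pbar / (1 - pbar)"
  defines "Pmat \<equiv> matrix_inv (mat 1 - diag_mat p ** K) ** (diag_mat (1 - p) ** K)"
  defines "\<pi> \<equiv> (1 / (1 - pbar)) *s (\<mu> v* (mat 1 - diag_mat p ** K))"
  defines "g \<equiv> matrix_inv (mat 1 - diag_mat p ** K) *v p"
  shows "invertible (mat 1 - diag_mat p ** K)
    \<and> (\<forall>(M :: 'w measure) R \<xi> \<eta>. cookie_process M R \<xi> K p \<eta> \<longrightarrow>
         (\<forall>m (i :: nat \<Rightarrow> 'n).
            measure M {\<omega>\<in>space M. \<forall>k\<le>m. I_type R \<xi> k \<omega> = i k}
            = \<eta> $ i 0 * (\<Prod>k<m. Pmat $ i k $ i (Suc k))))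
    \<and> stationary_dist Pmat \<pi>
    \<and> (\<forall>\<nu>. stationary_dist Pmat \<nu> \<longrightarrow> \<nu> = \<pi>)
    \<and> \<pi> = (1 + lam) *s (\<mu> v* (mat 1 - diag_mat p ** K))
    \<and> (\<forall>(M :: 'w measure) R \<xi> i. cookie_process M R \<xi> K p (axis i 1) \<longrightarrow>
         (\<integral>\<^sup>+ \<omega>. ennreal (real (G_succ \<xi> 1 \<omega>)) \<partial>M) = ennreal (g $ i))
    \<and> \<pi> \<bullet> g = lam"
proof -
  interpret stationary_cookie_kernel K p \<mu>
    using assms(1-4) by unfold_locales auto
  have Pmat: "Pmat = Pi_mat K p" and g: "g = green_mat K p *v p"
    by (simp_all add: Pmat_def g_def Pi_mat_def green_mat_def)
  have markov: "measure M {\<omega>\<in>space M. \<forall>k\<le>m. I_type R \<xi> k \<omega> = i k}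
      = \<eta> $ i 0 * (\<Prod>k<m. Pmat $ i k $ i (Suc k))"
    if "cookie_process M R \<xi> K p \<eta>" for M :: "'w measure" and R \<xi> \<eta> m and i :: "nat \<Rightarrow> 'n"
  proof -
    interpret cookie_space K p M R \<xi> \<eta> by unfold_locales (rule that)
    show ?thesis unfolding Pmat by (rule measure_I_type_eq)
  qed
  have mean_G: "(\<integral>\<^sup>+ \<omega>. ennreal (real (G_succ \<xi> 1 \<omega>)) \<partial>M) = ennreal (g $ i)"
    if "cookie_process M R \<xi> K p (axis i 1)" for M :: "'w measure" and R \<xi> i
  proof -
    interpret cookie_space K p M R \<xi> "axis i 1" by unfold_locales (rule that)
    show ?thesis unfolding g nn_integral_G_succ_1 inner_axis_vector_matrix_mult ..
  qed
  have \<pi>: "\<pi> = (1 / (1 - \<mu> \<bullet> p)) *s failure_flow"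
    by (simp add: \<pi>_def pbar_def failure_flow_def)
  have lam: "1 + lam = 1 / (1 - pbar)"
    using mean_success_lt_1 by (simp add: lam_def pbar_def field_simps)
  show ?thesis
  proof (intro conjI)
    show "invertible (mat 1 - diag_mat p ** K)" by (rule invertible_success)
    show "stationary_dist Pmat \<pi>"
      unfolding Pmat \<pi> by (rule stationary_Pi_mat)
    show "\<forall>\<nu>. stationary_dist Pmat \<nu> \<longrightarrow> \<nu> = \<pi>"
      unfolding Pmat \<pi> using stationary_Pi_mat_unique by blast
    show "\<pi> = (1 + lam) *s (\<mu> v* (mat 1 - diag_mat p ** K))"
      unfolding \<pi>_def lam ..
    show "\<pi> \<bullet> g = lam"
      unfolding \<pi> g lam_def pbar_def by (rule stationary_Pi_mat_inner_green)
  qed (use markov mean_G in blast)+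
qed

end
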